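(* Let $\mathcal{H}$ be the Hilbert space described in the context and $p\in[1,\infty)$. Let $\mu$ be a Borel probability measure on $\mathcal{H}$ such that for some $s>2p$, $$\widetilde{M}_s(\mu):=\int \Big(\sum_{j=1}^{\infty}\frac{1}{\lambda_j^2}\langle x, \psi_j\rangle^2_{L^2} \Big)^{\frac{s}{2}}\,\mu(dx) <\infty,$$ and assume there are constants $\gamma,c,C>0$ with $\lambda_j\le C\exp(-cj^\gamma)$ for all $j\ge1$. Then $$\int_{\mathcal{H}} \|\mathrm{Proj}^d (x)-x\|^q_{\mathcal{H}}\,\mu(dx) \leq C \exp\left(-c qd^\gamma\right)$$ for all $d\geq 1$ and all $q\in [p,s]$, where the constant $c$ depends only on $\widetilde{M}_s(\mu)$ and the constant $C$ depends only on $q$ and $\widetilde{M}_s(\mu)$.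
   Context: Let $(\Omega,m)$ be a measure space, $(\psi_j)_{j\ge1}$ an orthonormal basis of $L^2(\Omega,m)$ with inner product $\langle\cdot,\cdot\rangle_{L^2}$, and $(\lambda_j)_{j\ge1}$ a non-increasing sequence of positive numbers converging to $0$. Let $\mathcal{H}=\{f\in L^2(\Omega,m):\sum_j\langle f,\psi_j\rangle_{L^2}^2/\lambda_j<\infty\}$ with inner product $\langle f,g\rangle_{\mathcal{H}}=\sum_j\lambda_j^{-1}\langle f,\psi_j\rangle_{L^2}\langle g,\psi_j\rangle_{L^2}$ and norm $\|\cdot\|_{\mathcal{H}}$. $\mathrm{Proj}^d$ is the orthogonal projection onto $\mathrm{span}\{\sqrt{\lambda_j}\psi_j:j=1,\dots,d\}$. *)

theory Defs
  imports "HOL-Probability.Probability"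
begin

text \<open>The measure space (Omega, m) is an arbitrary measure M :: 'a measure.
  Elements of L^2 are represented by square-integrable measurable functions 'a => real.
  The orthonormal basis psi and the eigenvalues lam are indexed by j >= 1
  (the values at index 0 are irrelevant).\<close>

definition L2_set :: "'a measure \<Rightarrow> ('a \<Rightarrow> real) set" where
  "L2_set M = {f. f \<in> borel_measurable M \<and> integrable M (\<lambda>w. (f w)^2)}"

definition L2_inner :: "'a measure \<Rightarrow> ('a \<Rightarrow> real) \<Rightarrow> ('a \<Rightarrow> real) \<Rightarrow> real" where
  "L2_inner M f g = (LINT w|M. f w * g w)"

definition is_ONB :: "'a measure \<Rightarrow> (nat \<Rightarrow> 'a \<Rightarrow> real) \<Rightarrow> bool" where
  "is_ONB M psi \<longleftrightarrow>
     (\<forall>j\<ge>1. psi j \<in> L2_set M) \<and>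
     (\<forall>i\<ge>1. \<forall>j\<ge>1. L2_inner M (psi i) (psi j) = (if i = j then 1 else 0)) \<and>
     (\<forall>f\<in>L2_set M. (\<forall>j\<ge>1. L2_inner M f (psi j) = 0) \<longrightarrow> (AE w in M. f w = 0))"

definition H_set :: "'a measure \<Rightarrow> (nat \<Rightarrow> 'a \<Rightarrow> real) \<Rightarrow> (nat \<Rightarrow> real) \<Rightarrow> ('a \<Rightarrow> real) set" where
  "H_set M psi lam = {f \<in> L2_set M.
      summable (\<lambda>j. (L2_inner M f (psi (Suc j)))^2 / lam (Suc j))}"

definition H_inner :: "'a measure \<Rightarrow> (nat \<Rightarrow> 'a \<Rightarrow> real) \<Rightarrow> (nat \<Rightarrow> real)
    \<Rightarrow> ('a \<Rightarrow> real) \<Rightarrow> ('a \<Rightarrow> real) \<Rightarrow> real" where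
  "H_inner M psi lam f g =
     (\<Sum>j. L2_inner M f (psi (Suc j)) * L2_inner M g (psi (Suc j)) / lam (Suc j))"

definition H_norm :: "'a measure \<Rightarrow> (nat \<Rightarrow> 'a \<Rightarrow> real) \<Rightarrow> (nat \<Rightarrow> real)
    \<Rightarrow> ('a \<Rightarrow> real) \<Rightarrow> real" where
  "H_norm M psi lam f = sqrt (H_inner M psi lam f f)"

definition H_open :: "'a measure \<Rightarrow> (nat \<Rightarrow> 'a \<Rightarrow> real) \<Rightarrow> (nat \<Rightarrow> real)
    \<Rightarrow> ('a \<Rightarrow> real) set \<Rightarrow> bool" where
  "H_open M psi lam U \<longleftrightarrow> U \<subseteq> H_set M psi lam \<and>
     (\<forall>x\<in>U. \<exists>e>0. \<forall>y\<in>H_set M psi lam.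
        H_norm M psi lam (\<lambda>w. y w - x w) < e \<longrightarrow> y \<in> U)"

definition H_borel :: "'a measure \<Rightarrow> (nat \<Rightarrow> 'a \<Rightarrow> real) \<Rightarrow> (nat \<Rightarrow> real)
    \<Rightarrow> ('a \<Rightarrow> real) measure" where
  "H_borel M psi lam = sigma (H_set M psi lam) {U. H_open M psi lam U}"

text \<open>Orthogonal projection onto span of the H-orthonormal family sqrt(lam j) psi j, j = 1..d.\<close>

definition H_ONvec :: "(nat \<Rightarrow> 'a \<Rightarrow> real) \<Rightarrow> (nat \<Rightarrow> real) \<Rightarrow> nat \<Rightarrow> 'a \<Rightarrow> real" where
  "H_ONvec psi lam j = (\<lambda>w. sqrt (lam j) * psi j w)"

definition Proj :: "'a measure \<Rightarrow> (nat \<Rightarrow> 'a \<Rightarrow> real) \<Rightarrow> (nat \<Rightarrow> real) \<Rightarrow> nat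
    \<Rightarrow> ('a \<Rightarrow> real) \<Rightarrow> 'a \<Rightarrow> real" where
  "Proj M psi lam d x = (\<lambda>w. \<Sum>j=1..d.
      H_inner M psi lam x (H_ONvec psi lam j) * H_ONvec psi lam j w)"

definition Mtilde :: "'a measure \<Rightarrow> (nat \<Rightarrow> 'a \<Rightarrow> real) \<Rightarrow> (nat \<Rightarrow> real) \<Rightarrow> real
    \<Rightarrow> ('a \<Rightarrow> real) measure \<Rightarrow> ennreal" where
  "Mtilde M psi lam s \<mu> = (\<integral>\<^sup>+ x.
      (let a = (\<lambda>j. (L2_inner M x (psi (Suc j)))^2 / (lam (Suc j))^2) in
        if summable a then ennreal ((suminf a) powr (s / 2)) else \<infinity>) \<partial>\<mu>)"

end

theory Submission
  imports Defs
begin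

text \<open>Write a_j = <x, psi_j>. The residual Proj^d x - x has coefficients -a_j for j > d and 0
  otherwise, so, lam being non-increasing,
    ||Proj^d x - x||_H^2 = sum_{j>d} a_j^2 / lam_j <= lam_{d+1} * S(x),  S(x) = sum_j a_j^2 / lam_j^2.
  For q <= s we have S^(q/2) <= 1 + S^(s/2), and the integral of S^(s/2) is M~_s(mu); hence the q-th
  moment of the residual is at most lam_{d+1}^(q/2) (1 + M~_s(mu)), and the decay of lam gives the rate
  with c = c0/2.\<close>

lemma L2_set_mult_integrable:
  assumes "f \<in> L2_set M" "g \<in> L2_set M"
  shows "integrable M (\<lambda>w. f w * g w)"
proof (rule Bochner_Integration.integrable_bound[where f="\<lambda>w. (f w)^2 + (g w)^2"])
  show "integrable M (\<lambda>w. (f w)^2 + (g w)^2)" "(\<lambda>w. f w * g w) \<in> borel_measurable M"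
    using assms by (auto simp: L2_set_def)
  have "\<bar>f w * g w\<bar> \<le> (f w)^2 + (g w)^2" for w
  proof -
    have "2 * (\<bar>f w\<bar> * \<bar>g w\<bar>) \<le> (f w)^2 + (g w)^2"
      using sum_squares_bound[of "\<bar>f w\<bar>" "\<bar>g w\<bar>"] by (simp add: mult.assoc)
    moreover have "0 \<le> \<bar>f w\<bar> * \<bar>g w\<bar>" by simp
    ultimately show ?thesis unfolding abs_mult by linarith
  qed
  then show "AE w in M. norm (f w * g w) \<le> norm ((f w)^2 + (g w)^2)"
    by simp
qed

lemma L2_set_diff:
  assumes "f \<in> L2_set M" "g \<in> L2_set M"
  shows "(\<lambda>w. f w - g w) \<in> L2_set M"
proof -
  have "(\<lambda>w. (f w - g w)^2) = (\<lambda>w. (f w)^2 + (g w)^2 - 2 * (f w * g w))"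
    by (auto simp: power2_eq_square algebra_simps)
  moreover have "integrable M (\<lambda>w. (f w)^2 + (g w)^2 - 2 * (f w * g w))"
    using assms L2_set_mult_integrable[OF assms] by (auto simp: L2_set_def)
  ultimately show ?thesis
    using assms by (auto simp: L2_set_def)
qed

lemma L2_inner_diff_left:
  assumes "f \<in> L2_set M" "g \<in> L2_set M" "h \<in> L2_set M"
  shows "L2_inner M (\<lambda>w. f w - g w) h = L2_inner M f h - L2_inner M g h"
  unfolding L2_inner_def left_diff_distrib
  by (rule Bochner_Integration.integral_diff) (auto intro: L2_set_mult_integrable assms)

lemma is_ONB_L2_set: "is_ONB M psi \<Longrightarrow> j \<ge> 1 \<Longrightarrow> psi j \<in> L2_set M"
  by (simp add: is_ONB_def)

lemma is_ONB_orthonormal: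
  "is_ONB M psi \<Longrightarrow> i \<ge> 1 \<Longrightarrow> j \<ge> 1 \<Longrightarrow> L2_inner M (psi i) (psi j) = (if i = j then 1 else 0)"
  by (simp add: is_ONB_def)

lemma H_set_diff:
  assumes onb: "is_ONB M psi" and lam_pos: "\<forall>j\<ge>1. lam j > 0"
    and x: "x \<in> H_set M psi lam" and y: "y \<in> H_set M psi lam"
  shows "(\<lambda>w. y w - x w) \<in> H_set M psi lam"
proof -
  let ?a = "\<lambda>f j. L2_inner M f (psi (Suc j))"
  have xL: "x \<in> L2_set M" and yL: "y \<in> L2_set M"
    and sx: "summable (\<lambda>j. (?a x j)^2 / lam (Suc j))"
    and sy: "summable (\<lambda>j. (?a y j)^2 / lam (Suc j))"
    using x y by (auto simp: H_set_def)
  have "norm ((?a (\<lambda>w. y w - x w) j)^2 / lam (Suc j))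
      \<le> 2 * ((?a y j)^2 / lam (Suc j)) + 2 * ((?a x j)^2 / lam (Suc j))" for j
  proof -
    have "(?a y j - ?a x j)^2 \<le> 2 * (?a y j)^2 + 2 * (?a x j)^2"
      using sum_squares_bound[of "?a y j" "- ?a x j"] by (simp add: power2_diff)
    then show ?thesis
      using lam_pos[rule_format, of "Suc j"] L2_inner_diff_left[OF yL xL is_ONB_L2_set[OF onb, of "Suc j"]]
      by (simp add: divide_right_mono flip: add_divide_distrib)
  qed
  then have "summable (\<lambda>j. (?a (\<lambda>w. y w - x w) j)^2 / lam (Suc j))"
    by (rule summable_comparison_test'[OF summable_add[OF summable_mult[OF sy, of 2]
          summable_mult[OF sx, of 2]]])
  then show ?thesis
    using L2_set_diff[OF yL xL] by (simp add: H_set_def)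
qed

lemma L2_inner_psi_sq_le_H_inner:
  assumes lam_pos: "\<forall>j\<ge>1. lam j > 0" and z: "z \<in> H_set M psi lam"
  shows "(L2_inner M z (psi (Suc k)))^2 / lam (Suc k) \<le> H_inner M psi lam z z"
proof -
  have "summable (\<lambda>j. (L2_inner M z (psi (Suc j)))^2 / lam (Suc j))"
    using z by (simp add: H_set_def)
  then have "(\<Sum>j\<in>{k}. (L2_inner M z (psi (Suc j)))^2 / lam (Suc j))
      \<le> (\<Sum>j. (L2_inner M z (psi (Suc j)))^2 / lam (Suc j))"
    by (rule sum_le_suminf) (use lam_pos in \<open>auto intro!: divide_nonneg_pos\<close>)
  then show ?thesis
    by (simp add: H_inner_def power2_eq_square)
qed

lemma L2_inner_psi_Lipschitz:
  assumes onb: "is_ONB M psi" and lam_pos: "\<forall>j\<ge>1. lam j > 0"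
    and x: "x \<in> H_set M psi lam" and y: "y \<in> H_set M psi lam"
  shows "\<bar>L2_inner M y (psi (Suc k)) - L2_inner M x (psi (Suc k))\<bar>
    \<le> sqrt (lam (Suc k)) * H_norm M psi lam (\<lambda>w. y w - x w)"
proof -
  let ?z = "\<lambda>w. y w - x w"
  have "L2_inner M ?z (psi (Suc k)) = L2_inner M y (psi (Suc k)) - L2_inner M x (psi (Suc k))"
    using x y by (intro L2_inner_diff_left is_ONB_L2_set[OF onb]) (auto simp: H_set_def)
  moreover have "(L2_inner M ?z (psi (Suc k)))^2 \<le> lam (Suc k) * H_inner M psi lam ?z ?z"
    using L2_inner_psi_sq_le_H_inner[OF lam_pos H_set_diff[OF onb lam_pos x y], of k]
      lam_pos[rule_format, of "Suc k"]
    by (simp add: divide_le_eq mult.commute)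
  ultimately show ?thesis
    unfolding H_norm_def real_sqrt_mult[symmetric] by (metis real_sqrt_abs real_sqrt_le_mono)
qed

lemma space_H_borel [simp]: "space (H_borel M psi lam) = H_set M psi lam"
  unfolding H_borel_def by (rule space_measure_of) (auto simp: H_open_def)

lemma H_open_in_sets_H_borel: "H_open M psi lam U \<Longrightarrow> U \<in> sets (H_borel M psi lam)"
  unfolding H_borel_def by (subst sets_measure_of) (auto simp: H_open_def intro: sigma_sets.Basic)

lemma L2_inner_psi_measurable [measurable]:
  assumes onb: "is_ONB M psi" and lam_pos: "\<forall>j\<ge>1. lam j > 0"
  shows "(\<lambda>x. L2_inner M x (psi (Suc k))) \<in> borel_measurable (H_borel M psi lam)"
proof (rule borel_measurableI)
  fix S :: "real set" assume S: "open S"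
  let ?f = "\<lambda>x. L2_inner M x (psi (Suc k))"
  let ?r = "sqrt (lam (Suc k))"
  have r: "?r > 0" using lam_pos by simp
  have "H_open M psi lam (?f -` S \<inter> H_set M psi lam)"
    unfolding H_open_def
  proof (intro conjI ballI)
    fix x assume x: "x \<in> ?f -` S \<inter> H_set M psi lam"
    then obtain e where e: "e > 0" "ball (?f x) e \<subseteq> S"
      using S openE by blast
    have "y \<in> ?f -` S" if y: "y \<in> H_set M psi lam" "H_norm M psi lam (\<lambda>w. y w - x w) < e / ?r" for y
    proof -
      have "dist (?f y) (?f x) \<le> ?r * H_norm M psi lam (\<lambda>w. y w - x w)"
        using L2_inner_psi_Lipschitz[OF onb lam_pos _ y(1)] x by (simp add: dist_real_def)
      also have "\<dots> < e"
        using y(2) r by (simp add: field_simps)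
      finally show ?thesis
        using e by (auto simp: dist_commute)
    qed
    then show "\<exists>e>0. \<forall>y\<in>H_set M psi lam.
        H_norm M psi lam (\<lambda>w. y w - x w) < e \<longrightarrow> y \<in> ?f -` S \<inter> H_set M psi lam"
      using e r by (intro exI[of _ "e / ?r"]) auto
  qed auto
  then show "?f -` S \<inter> space (H_borel M psi lam) \<in> sets (H_borel M psi lam)"
    by (simp add: H_open_in_sets_H_borel)
qed

definition Mtilde_integrand :: "'a measure \<Rightarrow> (nat \<Rightarrow> 'a \<Rightarrow> real) \<Rightarrow> (nat \<Rightarrow> real) \<Rightarrow> real
    \<Rightarrow> ('a \<Rightarrow> real) \<Rightarrow> ennreal" where
  "Mtilde_integrand M psi lam s x =
     (let a = (\<lambda>j. (L2_inner M x (psi (Suc j)))^2 / (lam (Suc j))^2) in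
        if summable a then ennreal ((suminf a) powr (s / 2)) else \<infinity>)"

lemma Mtilde_eq_nn_integral: "Mtilde M psi lam s \<mu> = (\<integral>\<^sup>+ x. Mtilde_integrand M psi lam s x \<partial>\<mu>)"
  unfolding Mtilde_def Mtilde_integrand_def ..

lemma Mtilde_integrand_measurable:
  assumes onb: "is_ONB M psi" and lam_pos: "\<forall>j\<ge>1. lam j > 0"
  shows "Mtilde_integrand M psi lam s \<in> borel_measurable (H_borel M psi lam)"
proof -
  let ?HB = "H_borel M psi lam"
  define a where "a = (\<lambda>x j. (L2_inner M x (psi (Suc j)))^2 / (lam (Suc j))^2)"
  have [measurable]: "(\<lambda>x. a x j) \<in> borel_measurable ?HB" for j
    unfolding a_def using onb lam_pos by measurable
  have a_nonneg: "0 \<le> a x j" for x j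
    by (simp add: a_def)
  have "{x \<in> space ?HB. summable (a x)} = {x \<in> space ?HB. (\<Sum>j. ennreal (a x j)) \<noteq> \<top>}"
    using summable_suminf_not_top[OF a_nonneg] suminf_ennreal2[OF a_nonneg] by auto
  also have "\<dots> \<in> sets ?HB"
    by measurable
  finally have "(\<lambda>x. if summable (a x) then ennreal (suminf (a x) powr (s / 2)) else \<infinity>)
      \<in> borel_measurable ?HB"
    by (rule measurable_If[rotated 2]) measurable
  then show ?thesis
    unfolding Mtilde_integrand_def Let_def a_def .
qed

lemma H_inner_ONvec:
  assumes onb: "is_ONB M psi" and lam_pos: "\<forall>j\<ge>1. lam j > 0" and j: "j \<ge> 1"
  shows "H_inner M psi lam x (H_ONvec psi lam j) = L2_inner M x (psi j) / sqrt (lam j)"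
proof -
  have "L2_inner M (H_ONvec psi lam j) (psi i) = (if i = j then sqrt (lam j) else 0)" if "i \<ge> 1" for i
    using is_ONB_orthonormal[OF onb j that]
    by (simp add: L2_inner_def H_ONvec_def mult.assoc)
  then have "(\<lambda>k. L2_inner M x (psi (Suc k)) * L2_inner M (H_ONvec psi lam j) (psi (Suc k)) / lam (Suc k))
      = (\<lambda>k. if k = j - 1 then L2_inner M x (psi (Suc k)) * sqrt (lam j) / lam (Suc k) else 0)"
    using j by (auto simp: fun_eq_iff)
  moreover have "(\<lambda>k. if k = j - 1 then L2_inner M x (psi (Suc k)) * sqrt (lam j) / lam (Suc k) else 0)
      sums (L2_inner M x (psi j) * sqrt (lam j) / lam j)"
    using sums_single[of "j - 1" "\<lambda>k. L2_inner M x (psi (Suc k)) * sqrt (lam j) / lam (Suc k)"] j by simp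
  ultimately have "H_inner M psi lam x (H_ONvec psi lam j) = L2_inner M x (psi j) * sqrt (lam j) / lam j"
    unfolding H_inner_def by (simp add: sums_iff)
  also have "\<dots> = L2_inner M x (psi j) / sqrt (lam j)"
    using lam_pos[rule_format, OF j] by (simp add: real_div_sqrt flip: divide_divide_eq_right)
  finally show ?thesis .
qed

lemma Proj_eq_Fourier_sum:
  assumes onb: "is_ONB M psi" and lam_pos: "\<forall>j\<ge>1. lam j > 0"
  shows "Proj M psi lam d x = (\<lambda>w. \<Sum>j=1..d. L2_inner M x (psi j) * psi j w)"
  unfolding Proj_def
proof (intro ext sum.cong refl)
  fix j w assume "j \<in> {1..d}"
  then have "j \<ge> 1" "lam j > 0"
    using lam_pos by auto
  then show "H_inner M psi lam x (H_ONvec psi lam j) * H_ONvec psi lam j w = L2_inner M x (psi j) * psi j w"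
    by (simp add: H_inner_ONvec[OF onb lam_pos]) (simp add: H_ONvec_def)
qed

lemma L2_inner_Proj_residual:
  assumes onb: "is_ONB M psi" and lam_pos: "\<forall>j\<ge>1. lam j > 0"
    and x: "x \<in> L2_set M" and k: "k \<ge> 1"
  shows "L2_inner M (\<lambda>w. Proj M psi lam d x w - x w) (psi k) = (if k \<le> d then 0 else - L2_inner M x (psi k))"
proof -
  have psi_L2: "psi j \<in> L2_set M" if "j \<ge> 1" for j
    using is_ONB_L2_set[OF onb that] .
  have int: "integrable M (\<lambda>w. L2_inner M x (psi j) * (psi j w * psi k w))" if "j \<in> {1..d}" for j
    using that k by (auto intro!: L2_set_mult_integrable psi_L2)
  have "L2_inner M (\<lambda>w. Proj M psi lam d x w - x w) (psi k)
     = (LINT w|M. (\<Sum>j=1..d. L2_inner M x (psi j) * (psi j w * psi k w)) - x w * psi k w)"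
    unfolding L2_inner_def Proj_eq_Fourier_sum[OF onb lam_pos]
    by (simp add: sum_distrib_right left_diff_distrib mult.assoc)
  also have "\<dots> = (LINT w|M. (\<Sum>j=1..d. L2_inner M x (psi j) * (psi j w * psi k w))) - L2_inner M x (psi k)"
    unfolding L2_inner_def[of M x "psi k"]
    by (rule Bochner_Integration.integral_diff[OF Bochner_Integration.integrable_sum[OF int]
          L2_set_mult_integrable[OF x psi_L2[OF k]]])
  also have "(LINT w|M. (\<Sum>j=1..d. L2_inner M x (psi j) * (psi j w * psi k w)))
      = (\<Sum>j=1..d. L2_inner M x (psi j) * L2_inner M (psi j) (psi k))"
    by (subst Bochner_Integration.integral_sum) (use int in \<open>auto simp: L2_inner_def[of M "psi _"]\<close>)
  also have "(\<Sum>j=1..d. L2_inner M x (psi j) * L2_inner M (psi j) (psi k))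
      = (\<Sum>j=1..d. if j = k then L2_inner M x (psi k) else 0)"
    using k by (intro sum.cong) (auto simp: is_ONB_orthonormal[OF onb])
  finally show ?thesis
    using k by simp
qed

lemma H_inner_Proj_residual:
  assumes onb: "is_ONB M psi" and lam_pos: "\<forall>j\<ge>1. lam j > 0" and x: "x \<in> L2_set M"
  shows "H_inner M psi lam (\<lambda>w. Proj M psi lam d x w - x w) (\<lambda>w. Proj M psi lam d x w - x w)
    = (\<Sum>j. if Suc j \<le> d then 0 else (L2_inner M x (psi (Suc j)))^2 / lam (Suc j))"
  unfolding H_inner_def
  by (rule arg_cong[where f=suminf]) (auto simp: L2_inner_Proj_residual[OF onb lam_pos x] power2_eq_square)

lemma H_inner_Proj_residual_le:
  assumes onb: "is_ONB M psi" and lam_pos: "\<forall>j\<ge>1. lam j > 0"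
    and lam_mono: "\<forall>i j. 1 \<le> i \<longrightarrow> i \<le> j \<longrightarrow> lam j \<le> lam i"
    and x: "x \<in> L2_set M"
    and summable: "summable (\<lambda>j. (L2_inner M x (psi (Suc j)))^2 / (lam (Suc j))^2)"
  shows "0 \<le> H_inner M psi lam (\<lambda>w. Proj M psi lam d x w - x w) (\<lambda>w. Proj M psi lam d x w - x w)"
    and "H_inner M psi lam (\<lambda>w. Proj M psi lam d x w - x w) (\<lambda>w. Proj M psi lam d x w - x w)
      \<le> lam (Suc d) * (\<Sum>j. (L2_inner M x (psi (Suc j)))^2 / (lam (Suc j))^2)"
proof -
  define a where "a j = (L2_inner M x (psi (Suc j)))^2 / (lam (Suc j))^2" for j
  define f where "f j = (if Suc j \<le> d then 0 else (L2_inner M x (psi (Suc j)))^2 / lam (Suc j))" for j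
  have f_nonneg: "0 \<le> f j" for j
    using lam_pos[rule_format, of "Suc j"] by (simp add: f_def)
  have f_le: "f j \<le> lam (Suc d) * a j" for j
  proof (cases "Suc j \<le> d")
    case False
    then have "f j = lam (Suc j) * a j"
      using lam_pos by (simp add: f_def a_def power2_eq_square)
    also have "\<dots> \<le> lam (Suc d) * a j"
      using False lam_mono by (intro mult_right_mono) (simp_all add: a_def)
    finally show ?thesis .
  qed (use lam_pos[rule_format, of "Suc d"] in \<open>simp add: f_def a_def\<close>)
  have "summable f"
    using f_nonneg f_le by (intro summable_comparison_test'[OF summable_mult[OF summable[folded a_def]]]) auto
  then have "0 \<le> suminf f" and "suminf f \<le> (\<Sum>j. lam (Suc d) * a j)"
    using f_nonneg f_le summable_mult[OF summable[folded a_def]] by (auto intro: suminf_nonneg suminf_le)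
  then show "0 \<le> H_inner M psi lam (\<lambda>w. Proj M psi lam d x w - x w) (\<lambda>w. Proj M psi lam d x w - x w)"
    and "H_inner M psi lam (\<lambda>w. Proj M psi lam d x w - x w) (\<lambda>w. Proj M psi lam d x w - x w)
      \<le> lam (Suc d) * (\<Sum>j. (L2_inner M x (psi (Suc j)))^2 / (lam (Suc j))^2)"
    using suminf_mult[OF summable[folded a_def]]
    by (simp_all add: H_inner_Proj_residual[OF onb lam_pos x] f_def[abs_def] a_def[abs_def])
qed

lemma powr_le_one_plus_powr:
  fixes S a b :: real
  assumes "0 \<le> S" "0 \<le> a" "a \<le> b"
  shows "S powr a \<le> 1 + S powr b"
proof (cases "S \<le> 1")
  case True
  then have "S powr a \<le> 1 powr a"
    using assms by (intro powr_mono2) auto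
  then show ?thesis
    using powr_ge_zero[of S b] unfolding powr_one_eq_one by linarith
next
  case False
  then have "S powr a \<le> S powr b"
    using assms(3) by (intro powr_mono) auto
  then show ?thesis by simp
qed

lemma H_norm_Proj_residual_powr_le:
  assumes onb: "is_ONB M psi" and lam_pos: "\<forall>j\<ge>1. lam j > 0"
    and lam_mono: "\<forall>i j. 1 \<le> i \<longrightarrow> i \<le> j \<longrightarrow> lam j \<le> lam i"
    and x: "x \<in> L2_set M" and q: "0 \<le> q" "q \<le> s"
  shows "ennreal (H_norm M psi lam (\<lambda>w. Proj M psi lam d x w - x w) powr q)
    \<le> ennreal (lam (Suc d) powr (q / 2)) * (1 + Mtilde_integrand M psi lam s x)"
proof -
  let ?h = "H_inner M psi lam (\<lambda>w. Proj M psi lam d x w - x w) (\<lambda>w. Proj M psi lam d x w - x w)"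
  let ?l = "lam (Suc d)"
  define a where "a j = (L2_inner M x (psi (Suc j)))^2 / (lam (Suc j))^2" for j
  have l: "?l > 0"
    using lam_pos by simp
  show ?thesis
  proof (cases "summable a")
    case False
    then show ?thesis
      using l by (simp add: Mtilde_integrand_def a_def[abs_def] ennreal_mult_top)
  next
    case True
    have h: "0 \<le> ?h" "?h \<le> ?l * suminf a"
      using H_inner_Proj_residual_le[OF onb lam_pos lam_mono x True[unfolded a_def]]
      by (simp_all add: a_def[abs_def])
    have S: "0 \<le> suminf a"
      using True by (intro suminf_nonneg) (simp_all add: a_def)
    have "H_norm M psi lam (\<lambda>w. Proj M psi lam d x w - x w) powr q = ?h powr (q / 2)"
      using h(1) by (simp add: H_norm_def powr_half_sqrt[symmetric] powr_powr)
    also have "\<dots> \<le> (?l * suminf a) powr (q / 2)"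
      using h q by (intro powr_mono2) auto
    also have "\<dots> = ?l powr (q / 2) * suminf a powr (q / 2)"
      using l S by (simp add: powr_mult)
    also have "\<dots> \<le> ?l powr (q / 2) * (1 + suminf a powr (s / 2))"
      using S q by (intro mult_left_mono powr_le_one_plus_powr) auto
    finally have "ennreal (H_norm M psi lam (\<lambda>w. Proj M psi lam d x w - x w) powr q)
        \<le> ennreal (?l powr (q / 2) * (1 + suminf a powr (s / 2)))"
      by (rule ennreal_leI)
    also have "\<dots> = ennreal (?l powr (q / 2)) * (1 + ennreal (suminf a powr (s / 2)))"
      by (simp add: ennreal_mult ennreal_plus)
    finally show ?thesis
      using True by (simp add: Mtilde_integrand_def a_def[symmetric])
  qed
qed

lemma nn_integral_H_norm_Proj_residual_le:
  assumes onb: "is_ONB M psi" and lam_pos: "\<forall>j\<ge>1. lam j > 0"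
    and lam_mono: "\<forall>i j. 1 \<le> i \<longrightarrow> i \<le> j \<longrightarrow> lam j \<le> lam i"
    and \<mu>: "prob_space \<mu>" "sets \<mu> = sets (H_borel M psi lam)"
    and K: "Mtilde M psi lam s \<mu> \<le> ennreal K" and q: "0 \<le> q" "q \<le> s"
  shows "(\<integral>\<^sup>+ x. ennreal (H_norm M psi lam (\<lambda>w. Proj M psi lam d x w - x w) powr q) \<partial>\<mu>)
    \<le> ennreal (lam (Suc d) powr (q / 2) * (1 + max K 0))"
proof -
  let ?l = "lam (Suc d) powr (q / 2)"
  have space: "space \<mu> = H_set M psi lam"
    using sets_eq_imp_space_eq[OF \<mu>(2)] by simp
  have meas: "Mtilde_integrand M psi lam s \<in> borel_measurable \<mu>"
    using Mtilde_integrand_measurable[OF onb lam_pos] measurable_cong_sets[OF \<mu>(2) refl] by blast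
  have "(\<integral>\<^sup>+ x. ennreal (H_norm M psi lam (\<lambda>w. Proj M psi lam d x w - x w) powr q) \<partial>\<mu>)
      \<le> (\<integral>\<^sup>+ x. ennreal ?l * (1 + Mtilde_integrand M psi lam s x) \<partial>\<mu>)"
    using H_norm_Proj_residual_powr_le[OF onb lam_pos lam_mono _ q]
    by (intro nn_integral_mono) (auto simp: space H_set_def)
  also have "\<dots> = ennreal ?l * (1 + Mtilde M psi lam s \<mu>)"
    using meas prob_space.emeasure_space_1[OF \<mu>(1)]
    by (simp add: nn_integral_cmult nn_integral_add Mtilde_eq_nn_integral)
  also have "\<dots> \<le> ennreal ?l * (1 + ennreal (max K 0))"
    using order_trans[OF K ennreal_leI[of K "max K 0"]] by (intro mult_left_mono add_left_mono) auto
  also have "\<dots> = ennreal (?l * (1 + max K 0))"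
    by (simp add: ennreal_mult ennreal_plus)
  finally show ?thesis .
qed

lemma powr_half_le_exp_decay:
  fixes l C0 c0 \<gamma> q :: real
  assumes "0 \<le> l" "l \<le> C0 * exp (- c0 * real (Suc d) powr \<gamma>)"
    and "0 \<le> C0" "0 \<le> c0" "0 \<le> \<gamma>" "0 \<le> q"
  shows "l powr (q / 2) \<le> C0 powr (q / 2) * exp (- (c0 / 2) * q * real d powr \<gamma>)"
proof -
  have "real d powr \<gamma> \<le> real (Suc d) powr \<gamma>"
    using assms(5) by (intro powr_mono2) auto
  then have "C0 * exp (- c0 * real (Suc d) powr \<gamma>) \<le> C0 * exp (- c0 * real d powr \<gamma>)"
    using assms(3,4) by (intro mult_left_mono) (simp_all add: mult_left_mono)
  then have "l powr (q / 2) \<le> (C0 * exp (- c0 * real d powr \<gamma>)) powr (q / 2)"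
    using assms(1,2,6) by (intro powr_mono2) auto
  also have "\<dots> = C0 powr (q / 2) * exp (- c0 * real d powr \<gamma>) powr (q / 2)"
    using assms(3) by (simp add: powr_mult)
  also have "exp (- c0 * real d powr \<gamma>) powr (q / 2) = exp (- (c0 / 2) * q * real d powr \<gamma>)"
    by (simp add: powr_def)
  finally show ?thesis .
qed

theorem lemma6p5:
  fixes M :: "'a measure" and psi :: "nat \<Rightarrow> 'a \<Rightarrow> real" and lam :: "nat \<Rightarrow> real"
    and p s \<gamma> c0 C0 K :: real
  assumes onb: "is_ONB M psi"
    and lam_pos: "\<forall>j\<ge>1. lam j > 0"
    and lam_mono: "\<forall>i j. 1 \<le> i \<longrightarrow> i \<le> j \<longrightarrow> lam j \<le> lam i"
    and lam_lim: "lam \<longlonglongrightarrow> 0"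
    and p: "1 \<le> p" and s: "s > 2 * p"
    and pos_const: "\<gamma> > 0" "c0 > 0" "C0 > 0"
    and decay: "\<forall>j\<ge>1. lam j \<le> C0 * exp (- c0 * real j powr \<gamma>)"
  shows "\<exists>c>0. \<forall>q\<in>{p..s}. \<exists>C>0. \<forall>\<mu>.
           prob_space \<mu> \<longrightarrow> sets \<mu> = sets (H_borel M psi lam) \<longrightarrow>
           Mtilde M psi lam s \<mu> \<le> ennreal K \<longrightarrow>
           (\<forall>d\<ge>1. (\<integral>\<^sup>+ x. ennreal (H_norm M psi lam (\<lambda>w. Proj M psi lam d x w - x w) powr q) \<partial>\<mu>)
                    \<le> ennreal (C * exp (- c * q * real d powr \<gamma>)))"
proof (rule exI[of _ "c0 / 2"], intro conjI ballI)
  fix q assume "q \<in> {p..s}"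
  then have q: "0 \<le> q" "q \<le> s"
    using p by auto
  let ?C = "C0 powr (q / 2) * (1 + max K 0)"
  have "(\<integral>\<^sup>+ x. ennreal (H_norm M psi lam (\<lambda>w. Proj M psi lam d x w - x w) powr q) \<partial>\<mu>)
      \<le> ennreal (?C * exp (- (c0 / 2) * q * real d powr \<gamma>))"
    if \<mu>: "prob_space \<mu>" "sets \<mu> = sets (H_borel M psi lam)" and K: "Mtilde M psi lam s \<mu> \<le> ennreal K"
    for \<mu> d
  proof -
    have lam_le: "lam (Suc d) powr (q / 2) \<le> C0 powr (q / 2) * exp (- (c0 / 2) * q * real d powr \<gamma>)"
      using lam_pos[rule_format, of "Suc d"] decay pos_const q by (intro powr_half_le_exp_decay) auto
    have "lam (Suc d) powr (q / 2) * (1 + max K 0) \<le> ?C * exp (- (c0 / 2) * q * real d powr \<gamma>)"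
      using mult_right_mono[OF lam_le, of "1 + max K 0"] by (simp add: mult_ac)
    then show ?thesis
      using nn_integral_H_norm_Proj_residual_le[OF onb lam_pos lam_mono \<mu> K q]
      by (meson ennreal_leI order_trans)
  qed
  moreover have "?C > 0"
    using pos_const by (simp add: add_pos_nonneg)
  ultimately show "\<exists>C>0. \<forall>\<mu>. prob_space \<mu> \<longrightarrow> sets \<mu> = sets (H_borel M psi lam) \<longrightarrow>
      Mtilde M psi lam s \<mu> \<le> ennreal K \<longrightarrow>
      (\<forall>d\<ge>1. (\<integral>\<^sup>+ x. ennreal (H_norm M psi lam (\<lambda>w. Proj M psi lam d x w - x w) powr q) \<partial>\<mu>)
        \<le> ennreal (C * exp (- (c0 / 2) * q * real d powr \<gamma>)))"
    by blast
qed (use pos_const in simp)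

end
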